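(* For any finite family $\{(\sigma_{i,A},\sigma_{i,B})\;\vert\; i\in I\}\subseteq\mathfrak{S}_A\times\mathfrak{S}_B$ and any $(\sigma'_A,\sigma'_B)\in\mathfrak{S}_A\times\mathfrak{S}_B$, $$\Big(\inf^{S_{AB}}_{i\in I}\sigma_{i,A}\otimes\sigma_{i,B}\Big)\sqsubseteq_{S_{AB}}\sigma'_A\otimes\sigma'_B\ \Rightarrow\ \Big(\inf^{\widetilde{S}_{AB}}_{i\in I}\sigma_{i,A}\widetilde{\otimes}\sigma_{i,B}\Big)\sqsubseteq_{\widetilde{S}_{AB}}\sigma'_A\widetilde{\otimes}\sigma'_B.$$
   Context: $\mathfrak{S}_A,\mathfrak{S}_B$ are down-complete Inf semi-lattices with bottom, carriers of States/Effects Chu spaces $(\mathfrak{S}_A,\mathfrak{E}_A,\epsilon^{\mathfrak{S}_A})$, $(\mathfrak{S}_B,\mathfrak{E}_B,\epsilon^{\mathfrak{S}_B})$ with values in $\mathfrak{B}=\{\mathbf{Y},\mathbf{N},\bot\}$ (meet $\wedge$, product $\bullet$ with $x\bullet\mathbf{Y}=x$, $x\bullet\mathbf{N}=\mathbf{N}$, $\bot\bullet\bot=\bot$). $S_{AB}=\mathfrak{S}_A\otimes\mathfrak{S}_B$ is Fraser's canonical tensor product: the Inf semi-lattice generated by elements $\sigma_A\otimes\sigma_B$ subject to $(\sigma_A\sqcap\sigma'_A)\otimes\sigma_B=(\sigma_A\otimes\sigma_B)\sqcap(\sigma'_A\otimes\sigma_B)$ and $\sigma_A\otimes(\sigma_B\sqcap\sigma'_B)=(\sigma_A\otimes\sigma_B)\sqcap(\sigma_A\otimes\sigma'_B)$,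 ordered by $x\sqsubseteq y$ iff $x\sqcap y=x$. $\widetilde{S}_{AB}$ is the minimal tensor product: maps $\inf^{\widetilde{S}_{AB}}_{i\in I}\sigma_{i,A}\widetilde{\otimes}\sigma_{i,B}:(\mathfrak{l}_A,\mathfrak{l}_B)\mapsto\bigwedge_{i\in I}\epsilon^{\mathfrak{S}_A}_{\mathfrak{l}_A}(\sigma_{i,A})\bullet\epsilon^{\mathfrak{S}_B}_{\mathfrak{l}_B}(\sigma_{i,B})$ on $\mathfrak{E}_A\times\mathfrak{E}_B$, ordered pointwise. *)

theory Defs
  imports Main
begin

datatype B3 = Yes | No | Bt

instantiation B3 :: semilattice_inf
begin
definition less_eq_B3 :: "B3 \<Rightarrow> B3 \<Rightarrow> bool" where
  "less_eq_B3 x y \<longleftrightarrow> x = Bt \<or> x = y"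
definition less_B3 :: "B3 \<Rightarrow> B3 \<Rightarrow> bool" where
  "less_B3 x y \<longleftrightarrow> x \<le> y \<and> x \<noteq> y"
definition inf_B3 :: "B3 \<Rightarrow> B3 \<Rightarrow> B3" where
  "inf_B3 x y = (if x = y then x else Bt)"
instance
  by standard (auto simp: less_eq_B3_def less_B3_def inf_B3_def)
end

text \<open>Product on B: x \<bullet> Y = x, x \<bullet> N = N, bot \<bullet> bot = bot (taken commutative).\<close>
fun bprod :: "B3 \<Rightarrow> B3 \<Rightarrow> B3" where
  "bprod x Yes = x"
| "bprod x No = No"
| "bprod Yes Bt = Bt"
| "bprod No Bt = No"
| "bprod Bt Bt = Bt"

definition down_complete :: "'a::order itself \<Rightarrow> bool" where
  "down_complete _ \<longleftrightarrow>
     (\<forall>S::'a set. S \<noteq> {} \<longrightarrow>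
        (\<exists>x. (\<forall>s\<in>S. x \<le> s) \<and> (\<forall>y. (\<forall>s\<in>S. y \<le> s) \<longrightarrow> y \<le> x)))"

definition chu_eval :: "('e \<Rightarrow> 's::semilattice_inf \<Rightarrow> B3) \<Rightarrow> bool" where
  "chu_eval eps \<longleftrightarrow> (\<forall>l s s'. eps l (inf s s') = inf (eps l s) (eps l s'))"

text \<open>Elements of the free Inf semilattice on pairs are finite nonempty sets of pairs
  (meet = union); the tensor product is its quotient by the least congruence
  generated by the bilinearity relations.\<close>
inductive tens_eq :: "('a::semilattice_inf \<times> 'b::semilattice_inf) set \<Rightarrow> ('a \<times> 'b) set \<Rightarrow> bool" where
  te_refl: "finite X \<Longrightarrow> X \<noteq> {} \<Longrightarrow> tens_eq X X"
| te_sym: "tens_eq X Y \<Longrightarrow> tens_eq Y X"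
| te_trans: "tens_eq X Y \<Longrightarrow> tens_eq Y Z \<Longrightarrow> tens_eq X Z"
| te_cong: "tens_eq X X' \<Longrightarrow> tens_eq Y Y' \<Longrightarrow> tens_eq (X \<union> Y) (X' \<union> Y')"
| te_relA: "tens_eq {(inf a a', b)} {(a, b), (a', b)}"
| te_relB: "tens_eq {(a, inf b b')} {(a, b), (a, b')}"

definition tens_le :: "('a::semilattice_inf \<times> 'b::semilattice_inf) set \<Rightarrow> ('a \<times> 'b) set \<Rightarrow> bool" where
  "tens_le X Y \<longleftrightarrow> tens_eq (X \<union> Y) X"

definition min_tensor ::
  "('ea \<Rightarrow> 'a \<Rightarrow> B3) \<Rightarrow> ('eb \<Rightarrow> 'b \<Rightarrow> B3) \<Rightarrow> ('a \<times> 'b) set \<Rightarrow> ('ea \<times> 'eb \<Rightarrow> B3)" where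
  "min_tensor epsA epsB X =
     (\<lambda>(lA, lB). Inf_fin ((\<lambda>(a, b). bprod (epsA lA a) (epsB lB b)) ` X))"

end

theory Submission
  imports Defs
begin

text \<open>Because every effect evaluation is a meet-morphism into B and the product on B
  distributes over meets, the minimal tensor product of a finite set of pairs is
  unchanged by the bilinearity relations; it therefore factors through Fraser's
  tensor product as a meet-morphism, and meet-morphisms are monotone.\<close>

lemma bprod_inf_left: "bprod (inf x y) z = inf (bprod x z) (bprod y z)"
  by (cases x; cases y; cases z) (simp_all add: inf_B3_def)

lemma bprod_inf_right: "bprod z (inf x y) = inf (bprod z x) (bprod z y)"
  by (cases x; cases y; cases z) (simp_all add: inf_B3_def)

lemma tens_eq_finite_nonempty:
  assumes "tens_eq X Y"
  shows "finite X \<and> X \<noteq> {} \<and> finite Y \<and> Y \<noteq> {}"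
  using assms by induction auto

lemma min_tensor_union:
  assumes "finite X" "X \<noteq> {}" "finite Y" "Y \<noteq> {}"
  shows "min_tensor epsA epsB (X \<union> Y) = inf (min_tensor epsA epsB X) (min_tensor epsA epsB Y)"
  using assms by (auto simp: min_tensor_def image_Un Inf_fin.union)

lemma min_tensor_tens_eq:
  assumes "tens_eq X Y" and "chu_eval epsA" and "chu_eval epsB"
  shows "min_tensor epsA epsB X = min_tensor epsA epsB Y"
  using assms(1)
proof induction
  case (te_cong X X' Y Y')
  then show ?case
    using tens_eq_finite_nonempty[OF te_cong.hyps(1)] tens_eq_finite_nonempty[OF te_cong.hyps(2)]
    by (simp add: min_tensor_union)
next
  case (te_relA a a' b)
  then show ?case
    using assms(2) by (simp add: min_tensor_def chu_eval_def bprod_inf_left)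
next
  case (te_relB a b b')
  then show ?case
    using assms(3) by (simp add: min_tensor_def chu_eval_def bprod_inf_right)
qed simp_all

lemma min_tensor_mono:
  assumes "tens_le X Y" and "Y \<noteq> {}" and "chu_eval epsA" and "chu_eval epsB"
  shows "min_tensor epsA epsB X \<le> min_tensor epsA epsB Y"
proof -
  have eq: "tens_eq (X \<union> Y) X"
    using assms(1) unfolding tens_le_def .
  then have "finite X" "X \<noteq> {}" "finite Y"
    using tens_eq_finite_nonempty by auto
  have "min_tensor epsA epsB X = min_tensor epsA epsB (X \<union> Y)"
    using min_tensor_tens_eq[OF eq assms(3,4)] by simp
  also have "\<dots> = inf (min_tensor epsA epsB X) (min_tensor epsA epsB Y)"
    using \<open>finite X\<close> \<open>X \<noteq> {}\<close> \<open>finite Y\<close> assms(2) by (rule min_tensor_union)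
  finally show ?thesis
    by (metis inf.cobounded2)
qed

theorem mainTheorem10:
  fixes epsA :: "'ea \<Rightarrow> 'a::{semilattice_inf, order_bot} \<Rightarrow> B3"
    and epsB :: "'eb \<Rightarrow> 'b::{semilattice_inf, order_bot} \<Rightarrow> B3"
    and I :: "'i set" and sA :: "'i \<Rightarrow> 'a" and sB :: "'i \<Rightarrow> 'b"
    and sA' :: 'a and sB' :: 'b
  assumes "down_complete TYPE('a)" and "down_complete TYPE('b)"
    and "chu_eval epsA" and "chu_eval epsB"
    and "finite I" and "I \<noteq> {}"
    and "tens_le ((\<lambda>i. (sA i, sB i)) ` I) {(sA', sB')}"
  shows "min_tensor epsA epsB ((\<lambda>i. (sA i, sB i)) ` I) \<le> min_tensor epsA epsB {(sA', sB')}"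
  using assms(7) _ assms(3,4) by (rule min_tensor_mono) simp

end
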